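(* Let $G$ be a graph with $n\ge 2$ vertices, $m$ edges and minimum degree $\delta$. Then $$EE(G) \ge e^{\frac{2(m-\delta)}{n-1}} + (n-1) - \frac{2(m-\delta)}{n-1},$$ with equality if and only if $G$ is isomorphic to the edgeless graph $\overline{K_n}$.
   Context: All graphs are finite, simple and undirected. For a graph $G$ with adjacency matrix $A(G)$ having eigenvalues $\lambda_1\ge\cdots\ge\lambda_n$, the Estrada index is $EE(G)=\sum_{i=1}^n e^{\lambda_i}$. $\overline{K_n}$ denotes the graph on $n$ vertices with no edges. *)

theory Defs
  imports "Jordan_Normal_Form.Char_Poly"
begin

definition simple_graph :: "nat \<Rightarrow> (nat \<Rightarrow> nat \<Rightarrow> bool) \<Rightarrow> bool" where
  "simple_graph n E \<longleftrightarrow>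
     (\<forall>i j. E i j \<longrightarrow> i < n \<and> j < n) \<and> (\<forall>i j. E i j \<longrightarrow> E j i) \<and> (\<forall>i. \<not> E i i)"

definition adj_matrix :: "nat \<Rightarrow> (nat \<Rightarrow> nat \<Rightarrow> bool) \<Rightarrow> real mat" where
  "adj_matrix n E = mat n n (\<lambda>(i, j). if E i j then 1 else 0)"

text \<open>Eigenvalues with multiplicity: the (real) roots of the characteristic polynomial.
  For a real symmetric matrix all n eigenvalues are real.\<close>
definition estrada_index :: "nat \<Rightarrow> (nat \<Rightarrow> nat \<Rightarrow> bool) \<Rightarrow> real" where
  "estrada_index n E = (\<Sum>l\<in>#proots (char_poly (adj_matrix n E)). exp l)"

definition num_edges :: "nat \<Rightarrow> (nat \<Rightarrow> nat \<Rightarrow> bool) \<Rightarrow> nat" where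
  "num_edges n E = card {{i, j} | i j. i < n \<and> j < n \<and> E i j}"

definition degree :: "nat \<Rightarrow> (nat \<Rightarrow> nat \<Rightarrow> bool) \<Rightarrow> nat \<Rightarrow> nat" where
  "degree n E i = card {j. j < n \<and> E i j}"

definition min_degree :: "nat \<Rightarrow> (nat \<Rightarrow> nat \<Rightarrow> bool) \<Rightarrow> nat" where
  "min_degree n E = Min (degree n E ` {0..<n})"

definition graph_iso :: "nat \<Rightarrow> (nat \<Rightarrow> nat \<Rightarrow> bool) \<Rightarrow> (nat \<Rightarrow> nat \<Rightarrow> bool) \<Rightarrow> bool" where
  "graph_iso n E F \<longleftrightarrow> (\<exists>f. bij_betw f {0..<n} {0..<n} \<and>
      (\<forall>i<n. \<forall>j<n. E i j \<longleftrightarrow> F (f i) (f j)))"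

definition edgeless :: "nat \<Rightarrow> nat \<Rightarrow> bool" where
  "edgeless i j = False"

end

theory Submission
  imports Defs "Jordan_Normal_Form.Schur_Decomposition"
begin

text \<open>Let \<open>\<lambda>\<^sub>1\<close> be the largest adjacency eigenvalue and \<open>v\<close> a vertex of minimum degree.
  The Rayleigh quotient of the indicator vector of the vertices other than \<open>v\<close> is
  \<open>x = 2(m - \<delta>)/(n - 1)\<close>, so \<open>\<lambda>\<^sub>1 \<ge> x \<ge> 0\<close>. The eigenvalues sum to \<open>0\<close> and
  \<open>e\<^sup>t \<ge> 1 + t\<close> with equality only at \<open>t = 0\<close>, hence
  \<open>EE \<ge> e\<^bsup>\<lambda>\<^sub>1\<^esup> + (n - 1) - \<lambda>\<^sub>1 \<ge> e\<^sup>x + (n - 1) - x\<close>, the last step because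
  \<open>t \<mapsto> e\<^sup>t - t\<close> increases on \<open>[0, \<infinity>)\<close>. Equality forces all eigenvalues to vanish,
  i.e. \<open>2m = \<Sum> \<lambda>\<^sub>i\<^sup>2 = 0\<close>.

  The bound \<open>\<lambda>\<^sub>1 \<ge> y\<^sup>TAy / y\<^sup>Ty\<close> is obtained from traces rather than from an eigenbasis: after
  shifting \<open>A\<close> so that its spectrum is non-negative, iterated Cauchy--Schwarz bounds
  \<open>(y\<^sup>TAy / y\<^sup>Ty)\<^bsup>2\<^sup>k\<^esup>\<close> by \<open>tr A\<^bsup>2\<^sup>k\<^esup> = \<Sum> \<lambda>\<^sub>i\<^bsup>2\<^sup>k\<^esup> \<le> n \<lambda>\<^sub>1\<^bsup>2\<^sup>k\<^esup>\<close> for every \<open>k\<close>.\<close>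

section \<open>Traces and triangular matrices\<close>

definition mat_trace :: "'a::comm_ring_1 mat \<Rightarrow> 'a" where
  "mat_trace A = (\<Sum>i<dim_row A. A $$ (i, i))"

lemma mat_trace_mult_comm:
  assumes A: "A \<in> carrier_mat n m" and B: "B \<in> carrier_mat m n"
  shows "mat_trace (A * B) = mat_trace (B * A)"
proof -
  have "mat_trace (A * B) = (\<Sum>i<n. \<Sum>j<m. A $$ (i, j) * B $$ (j, i))"
    unfolding mat_trace_def using A B
    by (auto simp: scalar_prod_def lessThan_atLeast0 intro!: sum.cong)
  also have "\<dots> = (\<Sum>j<m. \<Sum>i<n. B $$ (j, i) * A $$ (i, j))"
    by (subst sum.swap) (simp add: ac_simps)
  also have "\<dots> = mat_trace (B * A)"
    unfolding mat_trace_def using A B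
    by (auto simp: scalar_prod_def lessThan_atLeast0 intro!: sum.cong)
  finally show ?thesis .
qed

lemma mat_trace_similar_mat_wit:
  fixes A :: "'a::comm_ring_1 mat"
  assumes "similar_mat_wit A B P Q"
  shows "mat_trace A = mat_trace B"
proof -
  define n where "n = dim_row A"
  note wit = similar_mat_witD[OF n_def assms]
  have "mat_trace A = mat_trace (P * (B * Q))"
    using wit by (simp add: assoc_mult_mat[of P n n B n Q n])
  also have "\<dots> = mat_trace (B * Q * P)"
    using wit by (intro mat_trace_mult_comm) auto
  also have "B * Q * P = B"
    using wit by (simp add: assoc_mult_mat[of B n n Q n P n])
  finally show ?thesis .
qed

lemma similar_mat_wit_add_smult_one:
  fixes A :: "'a::comm_ring_1 mat"
  assumes A: "A \<in> carrier_mat n n" and wit: "similar_mat_wit A B P Q"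
  shows "similar_mat_wit (A + c \<cdot>\<^sub>m 1\<^sub>m n) (B + c \<cdot>\<^sub>m 1\<^sub>m n) P Q"
proof -
  from similar_mat_witD2[OF A wit] have P: "P \<in> carrier_mat n n" and Q: "Q \<in> carrier_mat n n"
    and B: "B \<in> carrier_mat n n" and PQ: "P * Q = 1\<^sub>m n" and QP: "Q * P = 1\<^sub>m n"
    and AB: "A = P * B * Q" by auto
  have "P * (B + c \<cdot>\<^sub>m 1\<^sub>m n) = P * B + c \<cdot>\<^sub>m P"
    using P B by (simp add: mult_add_distrib_mat[of P n n] mult_smult_distrib[of P n n "1\<^sub>m n" n])
  then have "P * (B + c \<cdot>\<^sub>m 1\<^sub>m n) * Q = P * B * Q + c \<cdot>\<^sub>m (P * Q)"
    using P B Q by (simp add: add_mult_distrib_mat[of _ n n _ _ n] mult_smult_assoc_mat[of P n n Q n])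
  then have "A + c \<cdot>\<^sub>m 1\<^sub>m n = P * (B + c \<cdot>\<^sub>m 1\<^sub>m n) * Q"
    using AB PQ by simp
  then show ?thesis
    using A B P Q PQ QP by (intro similar_mat_witI) auto
qed

lemma upper_triangular_mult:
  fixes A :: "'a::comm_ring_1 mat"
  assumes A: "A \<in> carrier_mat n n" and B: "B \<in> carrier_mat n n"
    and uA: "upper_triangular A" and uB: "upper_triangular B"
  shows "upper_triangular (A * B)" and "\<And>i. i < n \<Longrightarrow> (A * B) $$ (i, i) = A $$ (i, i) * B $$ (i, i)"
proof -
  have entry: "(A * B) $$ (i, j) = (\<Sum>k<n. A $$ (i, k) * B $$ (k, j))" if "i < n" "j < n" for i j
    using A B that by (auto simp: scalar_prod_def lessThan_atLeast0 intro!: sum.cong)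
  have zero: "A $$ (i, k) * B $$ (k, j) = 0" if "i < n" "k < n" "j < i" "k \<noteq> i \<or> j \<noteq> i" for i j k
    using uA uB A B that by (cases "k < i") (auto simp: upper_triangular_def)
  show "upper_triangular (A * B)"
  proof
    fix i j assume "j < i" and "i < dim_row (A * B)"
    then show "(A * B) $$ (i, j) = 0"
      using A by (simp add: entry zero)
  qed
  fix i assume i: "i < n"
  have "(A * B) $$ (i, i) = (\<Sum>k<n. if k = i then A $$ (i, i) * B $$ (i, i) else 0)"
    unfolding entry[OF i i]
  proof (intro sum.cong refl)
    fix k assume "k \<in> {..<n}"
    then show "A $$ (i, k) * B $$ (k, i) = (if k = i then A $$ (i, i) * B $$ (i, i) else 0)"
      using uA uB A B i by (cases k i rule: linorder_cases) (auto simp: upper_triangular_def)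
  qed
  then show "(A * B) $$ (i, i) = A $$ (i, i) * B $$ (i, i)"
    using i by simp
qed

lemma upper_triangular_pow_mat:
  fixes B :: "'a::comm_ring_1 mat"
  assumes B: "B \<in> carrier_mat n n" and u: "upper_triangular B"
  shows "upper_triangular (B ^\<^sub>m k) \<and> (\<forall>i<n. (B ^\<^sub>m k) $$ (i, i) = B $$ (i, i) ^ k)"
proof (induction k)
  case 0
  then show ?case using B by auto
next
  case (Suc k)
  have Bk: "B ^\<^sub>m k \<in> carrier_mat n n" using B by simp
  with Suc show ?case
    using upper_triangular_mult[OF Bk B] u by (simp add: ac_simps)
qed

lemma mat_trace_pow_upper_triangular:
  fixes B :: "'a::comm_ring_1 mat"
  assumes "B \<in> carrier_mat n n" and "upper_triangular B"
  shows "mat_trace (B ^\<^sub>m k) = (\<Sum>i<n. B $$ (i, i) ^ k)"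
  using upper_triangular_pow_mat[OF assms, of k] assms(1) unfolding mat_trace_def by simp

lemma proots_prod_linear_factors: "proots (\<Prod>a\<leftarrow>as. [:- a, 1:]) = mset (as :: 'a::idom list)"
proof (induction as)
  case (Cons a as)
  have "(\<Prod>b\<leftarrow>as. [:- b, 1:]) \<noteq> 0" by (auto simp: prod_list_zero_iff)
  then show ?case using Cons by (simp add: proots_mult del: mult_pCons_left)
qed simp

text \<open>Schur triangularisation puts the eigenvalues on the diagonal and commutes with the shift.\<close>
lemma mat_trace_pow_shift_eq_sum_eigenvalues:
  fixes A :: "'a::conjugatable_ordered_field mat"
  assumes A: "A \<in> carrier_mat n n" and split: "char_poly A = (\<Prod>a\<leftarrow>as. [:- a, 1:])"
  shows "mat_trace ((A + c \<cdot>\<^sub>m 1\<^sub>m n) ^\<^sub>m k) = (\<Sum>l\<in>#proots (char_poly A). (l + c) ^ k)"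
proof -
  obtain B where B: "B \<in> carrier_mat n n" and ut: "upper_triangular B" and sim: "similar_mat A B"
    using schur_decomposition_exists[OF A split] by blast
  then obtain P Q where "similar_mat_wit A B P Q" unfolding similar_mat_def by blast
  then have "similar_mat_wit ((A + c \<cdot>\<^sub>m 1\<^sub>m n) ^\<^sub>m k) ((B + c \<cdot>\<^sub>m 1\<^sub>m n) ^\<^sub>m k) P Q"
    by (intro similar_mat_wit_pow similar_mat_wit_add_smult_one[OF A])
  then have "mat_trace ((A + c \<cdot>\<^sub>m 1\<^sub>m n) ^\<^sub>m k) = mat_trace ((B + c \<cdot>\<^sub>m 1\<^sub>m n) ^\<^sub>m k)"
    by (rule mat_trace_similar_mat_wit)
  also have "\<dots> = (\<Sum>i<n. (B $$ (i, i) + c) ^ k)"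
    using B ut by (subst mat_trace_pow_upper_triangular[of _ n]) (auto simp: upper_triangular_def)
  also have "\<dots> = (\<Sum>l\<leftarrow>diag_mat B. (l + c) ^ k)"
    using B by (simp add: diag_mat_def sum_list_sum_nth lessThan_atLeast0)
  also have "\<dots> = (\<Sum>l\<in>#mset (diag_mat B). (l + c) ^ k)"
    by (metis mset_map sum_mset_sum_list)
  also have "mset (diag_mat B) = proots (char_poly A)"
    using char_poly_similar[OF sim] char_poly_upper_triangular[OF B ut]
    by (simp add: proots_prod_linear_factors)
  finally show ?thesis .
qed

corollary mat_trace_pow_eq_sum_eigenvalues:
  fixes A :: "'a::conjugatable_ordered_field mat"
  assumes A: "A \<in> carrier_mat n n" and split: "char_poly A = (\<Prod>a\<leftarrow>as. [:- a, 1:])"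
  shows "mat_trace (A ^\<^sub>m k) = (\<Sum>l\<in>#proots (char_poly A). l ^ k)"
proof -
  have "A + 0 \<cdot>\<^sub>m 1\<^sub>m n = A" using A by (auto intro!: eq_matI)
  then show ?thesis
    using mat_trace_pow_shift_eq_sum_eigenvalues[OF A split, of 0 k] by simp
qed

section \<open>Real symmetric matrices\<close>

lemma real_symmetric_eigenvalue_real:
  fixes A :: "real mat"
  assumes A: "A \<in> carrier_mat n n" and sym: "\<And>i j. i < n \<Longrightarrow> j < n \<Longrightarrow> A $$ (i, j) = A $$ (j, i)"
    and ev: "eigenvalue (map_mat complex_of_real A) a"
  shows "a = complex_of_real (Re a)"
proof -
  let ?B = "map_mat complex_of_real A"
  from ev obtain v where "eigenvector ?B v a" unfolding eigenvalue_def by blast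
  with A have v: "v \<in> carrier_vec n" and v0: "v \<noteq> 0\<^sub>v n" and eq: "?B *\<^sub>v v = a \<cdot>\<^sub>v v"
    unfolding eigenvector_def by auto
  have row: "(\<Sum>j<n. complex_of_real (A $$ (i, j)) * v $ j) = a * v $ i" if "i < n" for i
    using arg_cong[OF eq, of "\<lambda>w. w $ i"] that A v
    by (simp add: scalar_prod_def lessThan_atLeast0 ac_simps)
  define s where "s = (\<Sum>i<n. cnj (v $ i) * (\<Sum>j<n. complex_of_real (A $$ (i, j)) * v $ j))"
  define r where "r = (\<Sum>i<n. cnj (v $ i) * v $ i)"
  have r_real: "r = complex_of_real (\<Sum>i<n. (cmod (v $ i))\<^sup>2)"
    unfolding r_def of_real_sum
    by (intro sum.cong refl) (metis complex_norm_square mult.commute of_real_power)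
  have "s = a * r"
    unfolding s_def r_def using row by (simp add: sum_distrib_left ac_simps)
  moreover have "cnj s = s"
  proof -
    have "cnj s = (\<Sum>i<n. \<Sum>j<n. v $ i * complex_of_real (A $$ (i, j)) * cnj (v $ j))"
      unfolding s_def by (simp add: sum_distrib_left ac_simps)
    also have "\<dots> = (\<Sum>j<n. \<Sum>i<n. v $ i * complex_of_real (A $$ (i, j)) * cnj (v $ j))"
      by (rule sum.swap)
    also have "\<dots> = s"
      unfolding s_def by (auto simp: sum_distrib_left ac_simps sym intro!: sum.cong)
    finally show ?thesis .
  qed
  moreover have "cnj r = r" unfolding r_real by simp
  moreover have "r \<noteq> 0"
  proof -
    obtain i where "i < n" "v $ i \<noteq> 0"
      using v v0 by (metis eq_vecI carrier_vecD index_zero_vec)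
    then have "0 < (\<Sum>i<n. (cmod (v $ i))\<^sup>2)"
      by (intro sum_pos2[of _ i]) auto
    then show ?thesis unfolding r_real by (metis of_real_eq_0_iff less_irrefl)
  qed
  ultimately have "cnj a = a" by (metis complex_cnj_mult mult_cancel_right)
  then show ?thesis by (metis Reals_cnj_iff complex_is_Real_iff of_real_Re)
qed

interpretation of_real_poly: map_poly_inj_idom_hom complex_of_real ..

lemma char_poly_real_symmetric_splits:
  fixes A :: "real mat"
  assumes A: "A \<in> carrier_mat n n" and sym: "\<And>i j. i < n \<Longrightarrow> j < n \<Longrightarrow> A $$ (i, j) = A $$ (j, i)"
  obtains es where "char_poly A = (\<Prod>a\<leftarrow>es. [:- a, 1:])" and "length es = n"
proof -
  let ?B = "map_mat complex_of_real A"
  have B: "?B \<in> carrier_mat n n" using A by simp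
  from char_poly_factorized[OF B] obtain as
    where cp: "char_poly ?B = (\<Prod>a\<leftarrow>as. [:- a, 1:])" and len: "length as = n" by blast
  have real: "a = complex_of_real (Re a)" if "a \<in> set as" for a
    using real_symmetric_eigenvalue_real[OF A sym] linear_poly_root[OF that]
    unfolding eigenvalue_root_char_poly[OF B] cp by blast
  have "map_poly complex_of_real (char_poly A) = char_poly ?B"
    by (rule of_real_hom.char_poly_hom[OF A, symmetric])
  also have "\<dots> = (\<Prod>a\<leftarrow>map Re as. map_poly complex_of_real [:- a, 1:])"
    unfolding cp map_map o_def
  proof (intro arg_cong[where f = prod_list] map_cong refl)
    fix a assume "a \<in> set as"
    have "map_poly complex_of_real [:- Re a, 1:] = [:- complex_of_real (Re a), 1:]"
      by (simp add: map_poly_pCons)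
    with real[OF \<open>a \<in> set as\<close>] show "[:- a, 1:] = map_poly complex_of_real [:- Re a, 1:]"
      by simp
  qed
  also have "\<dots> = map_poly complex_of_real (\<Prod>a\<leftarrow>map Re as. [:- a, 1:])"
    by (simp add: of_real_poly.hom_prod_list o_def)
  finally have "char_poly A = (\<Prod>a\<leftarrow>map Re as. [:- a, 1:])"
    by (rule of_real_poly.injectivity)
  with len show thesis by (intro that[of "map Re as"]) auto
qed

lemma pow_mat_add:
  fixes A :: "'a::comm_ring_1 mat"
  assumes A: "A \<in> carrier_mat n n"
  shows "A ^\<^sub>m (a + b) = A ^\<^sub>m a * A ^\<^sub>m b"
proof (induction b)
  case 0
  then show ?case using A by (simp add: right_mult_one_mat[of _ n n])
next
  case (Suc b)
  then show ?case
    using A by (simp add: assoc_mult_mat[of _ n n _ n _ n])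
qed

lemma pow_mat_symmetric:
  fixes A :: "'a::comm_ring_1 mat"
  assumes A: "A \<in> carrier_mat n n" and sym: "\<And>i j. i < n \<Longrightarrow> j < n \<Longrightarrow> A $$ (i, j) = A $$ (j, i)"
    and "i < n" and "j < n"
  shows "(A ^\<^sub>m k) $$ (i, j) = (A ^\<^sub>m k) $$ (j, i)"
proof -
  have AT: "transpose_mat A = A" using A sym by (auto intro!: eq_matI)
  have "transpose_mat (A ^\<^sub>m k) = A ^\<^sub>m k"
  proof (induction k)
    case (Suc k)
    have "transpose_mat (A ^\<^sub>m Suc k) = A ^\<^sub>m 1 * A ^\<^sub>m k"
      using transpose_mult[of "A ^\<^sub>m k" n n A n] A AT Suc by simp
    also have "\<dots> = A ^\<^sub>m Suc k"
      using pow_mat_add[OF A, of 1 k] by simp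
    finally show ?case .
  qed simp
  with A \<open>i < n\<close> \<open>j < n\<close> show ?thesis
    by (metis carrier_matD index_transpose_mat(1) pow_mat_dim_square)
qed

section \<open>Rayleigh quotients\<close>

lemma Cauchy_Schwarz_ineq_sum:
  fixes a b :: "'a \<Rightarrow> real"
  shows "(\<Sum>i\<in>I. a i * b i)\<^sup>2 \<le> (\<Sum>i\<in>I. (a i)\<^sup>2) * (\<Sum>i\<in>I. (b i)\<^sup>2)"
proof -
  have square: "(a i * b j - a j * b i)\<^sup>2
      = ((a i)\<^sup>2 * (b j)\<^sup>2 + (b i)\<^sup>2 * (a j)\<^sup>2) - 2 * ((a i * b i) * (a j * b j))" for i j
    by (simp add: power2_eq_square algebra_simps)
  have "0 \<le> (\<Sum>i\<in>I. \<Sum>j\<in>I. (a i * b j - a j * b i)\<^sup>2)"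
    by (intro sum_nonneg) auto
  also have "\<dots> = (\<Sum>i\<in>I. \<Sum>j\<in>I. (a i)\<^sup>2 * (b j)\<^sup>2) + (\<Sum>i\<in>I. \<Sum>j\<in>I. (b i)\<^sup>2 * (a j)\<^sup>2)
      - (\<Sum>i\<in>I. \<Sum>j\<in>I. 2 * ((a i * b i) * (a j * b j)))"
    by (simp only: square sum.distrib sum_subtractf)
  also have "\<dots> = 2 * ((\<Sum>i\<in>I. (a i)\<^sup>2) * (\<Sum>i\<in>I. (b i)\<^sup>2) - (\<Sum>i\<in>I. a i * b i)\<^sup>2)"
    by (simp add: sum_product[symmetric] sum_distrib_left[symmetric] sum_distrib_right[symmetric]
        power2_eq_square)
  finally show ?thesis by simp
qed

definition quad_form :: "real mat \<Rightarrow> (nat \<Rightarrow> real) \<Rightarrow> real" where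
  "quad_form X y = (\<Sum>i<dim_row X. \<Sum>k<dim_row X. y i * X $$ (i, k) * y k)"

lemma quad_form_add_smult_one:
  assumes X: "X \<in> carrier_mat n n"
  shows "quad_form (X + c \<cdot>\<^sub>m 1\<^sub>m n) y = quad_form X y + c * (\<Sum>i<n. (y i)\<^sup>2)"
proof -
  have entry: "y i * (X + c \<cdot>\<^sub>m 1\<^sub>m n) $$ (i, k) * y k
      = y i * X $$ (i, k) * y k + (if k = i then c * (y i)\<^sup>2 else 0)" if "i < n" "k < n" for i k
    using X that by (cases "k = i") (auto simp: power2_eq_square algebra_simps)
  have "quad_form (X + c \<cdot>\<^sub>m 1\<^sub>m n) y
      = (\<Sum>i<n. \<Sum>k<n. y i * X $$ (i, k) * y k + (if k = i then c * (y i)\<^sup>2 else 0))"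
    unfolding quad_form_def using X entry by (auto intro!: sum.cong)
  also have "\<dots> = quad_form X y + c * (\<Sum>i<n. (y i)\<^sup>2)"
    unfolding quad_form_def using X by (simp add: sum.distrib sum_distrib_left)
  finally show ?thesis .
qed

lemma quad_form_mult_self:
  assumes X: "X \<in> carrier_mat n n" and sym: "\<And>i j. i < n \<Longrightarrow> j < n \<Longrightarrow> X $$ (i, j) = X $$ (j, i)"
  shows "quad_form (X * X) y = (\<Sum>j<n. (\<Sum>k<n. X $$ (j, k) * y k)\<^sup>2)"
proof -
  have XX: "(X * X) $$ (i, k) = (\<Sum>j<n. X $$ (i, j) * X $$ (j, k))" if "i < n" "k < n" for i k
    using X that by (auto simp: scalar_prod_def lessThan_atLeast0 intro!: sum.cong)
  have "quad_form (X * X) y = (\<Sum>i<n. \<Sum>k<n. \<Sum>j<n. y i * X $$ (i, j) * (X $$ (j, k) * y k))"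
    unfolding quad_form_def using X XX
    by (auto simp: sum_distrib_left sum_distrib_right ac_simps intro!: sum.cong)
  also have "\<dots> = (\<Sum>i<n. \<Sum>j<n. \<Sum>k<n. y i * X $$ (i, j) * (X $$ (j, k) * y k))"
    by (intro sum.cong refl sum.swap)
  also have "\<dots> = (\<Sum>j<n. \<Sum>i<n. \<Sum>k<n. y i * X $$ (i, j) * (X $$ (j, k) * y k))"
    by (rule sum.swap)
  also have "\<dots> = (\<Sum>j<n. (\<Sum>i<n. X $$ (j, i) * y i) * (\<Sum>k<n. X $$ (j, k) * y k))"
    unfolding sum_product using sym by (auto simp: ac_simps intro!: sum.cong)
  finally show ?thesis by (simp add: power2_eq_square)
qed

lemma quad_form_square_le:
  assumes X: "X \<in> carrier_mat n n" and sym: "\<And>i j. i < n \<Longrightarrow> j < n \<Longrightarrow> X $$ (i, j) = X $$ (j, i)"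
  shows "(quad_form X y)\<^sup>2 \<le> (\<Sum>i<n. (y i)\<^sup>2) * quad_form (X * X) y"
proof -
  have "quad_form X y = (\<Sum>j<n. y j * (\<Sum>k<n. X $$ (j, k) * y k))"
    unfolding quad_form_def using X by (simp add: sum_distrib_left ac_simps)
  moreover have "quad_form (X * X) y = (\<Sum>j<n. (\<Sum>k<n. X $$ (j, k) * y k)\<^sup>2)"
    by (rule quad_form_mult_self[OF X sym])
  ultimately show ?thesis by (simp only: Cauchy_Schwarz_ineq_sum)
qed

lemma quad_form_mult_self_le_trace:
  assumes X: "X \<in> carrier_mat n n" and sym: "\<And>i j. i < n \<Longrightarrow> j < n \<Longrightarrow> X $$ (i, j) = X $$ (j, i)"
  shows "quad_form (X * X) y \<le> mat_trace (X * X) * (\<Sum>i<n. (y i)\<^sup>2)"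
proof -
  have "quad_form (X * X) y = (\<Sum>j<n. (\<Sum>k<n. X $$ (j, k) * y k)\<^sup>2)"
    by (rule quad_form_mult_self[OF X sym])
  also have "\<dots> \<le> (\<Sum>j<n. (\<Sum>k<n. (X $$ (j, k))\<^sup>2) * (\<Sum>k<n. (y k)\<^sup>2))"
    by (intro sum_mono Cauchy_Schwarz_ineq_sum)
  also have "\<dots> = (\<Sum>j<n. \<Sum>k<n. (X $$ (j, k))\<^sup>2) * (\<Sum>k<n. (y k)\<^sup>2)"
    by (simp add: sum_distrib_right)
  also have "(\<Sum>j<n. \<Sum>k<n. (X $$ (j, k))\<^sup>2) = mat_trace (X * X)"
    unfolding mat_trace_def using X sym
    by (auto simp: scalar_prod_def lessThan_atLeast0 power2_eq_square intro!: sum.cong)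
  finally show ?thesis .
qed

lemma quad_form_pow_two_pow_ge:
  assumes X: "X \<in> carrier_mat n n" and sym: "\<And>i j. i < n \<Longrightarrow> j < n \<Longrightarrow> X $$ (i, j) = X $$ (j, i)"
    and Y: "0 < (\<Sum>i<n. (y i)\<^sup>2)" and rho: "0 \<le> rho" "rho * (\<Sum>i<n. (y i)\<^sup>2) \<le> quad_form X y"
  shows "rho ^ 2 ^ k * (\<Sum>i<n. (y i)\<^sup>2) \<le> quad_form (X ^\<^sub>m 2 ^ k) y"
proof (induction k)
  case 0
  then show ?case using rho X by simp
next
  case (Suc k)
  define Ys where "Ys = (\<Sum>i<n. (y i)\<^sup>2)"
  define Z where "Z = X ^\<^sub>m 2 ^ k"
  have Z: "Z \<in> carrier_mat n n" using X unfolding Z_def by simp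
  have ZZ: "X ^\<^sub>m 2 ^ Suc k = Z * Z"
    unfolding Z_def using pow_mat_add[OF X, of "2 ^ k" "2 ^ k"] by (simp add: mult_2)
  have "Ys * (rho ^ 2 ^ Suc k * Ys) = (rho ^ 2 ^ k * Ys)\<^sup>2"
    by (simp add: power2_eq_square power_mult_distrib power_add mult_2 ac_simps)
  also have "\<dots> \<le> (quad_form Z y)\<^sup>2"
    using Suc rho Y unfolding Z_def Ys_def by (intro power_mono) auto
  also have "\<dots> \<le> Ys * quad_form (Z * Z) y"
    unfolding Ys_def Z_def by (rule quad_form_square_le[OF Z[unfolded Z_def] pow_mat_symmetric[OF X sym]])
  finally show ?case
    using Y unfolding ZZ Ys_def by simp
qed

lemma rayleigh_pow_le_mat_trace:
  assumes X: "X \<in> carrier_mat n n" and sym: "\<And>i j. i < n \<Longrightarrow> j < n \<Longrightarrow> X $$ (i, j) = X $$ (j, i)"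
    and Y: "0 < (\<Sum>i<n. (y i)\<^sup>2)" and rho: "0 \<le> rho" "rho * (\<Sum>i<n. (y i)\<^sup>2) \<le> quad_form X y"
  shows "rho ^ 2 ^ Suc k \<le> mat_trace (X ^\<^sub>m 2 ^ Suc k)"
proof -
  define Z where "Z = X ^\<^sub>m 2 ^ k"
  have Z: "Z \<in> carrier_mat n n" using X unfolding Z_def by simp
  have ZZ: "X ^\<^sub>m 2 ^ Suc k = Z * Z"
    unfolding Z_def using pow_mat_add[OF X, of "2 ^ k" "2 ^ k"] by (simp add: mult_2)
  have "rho ^ 2 ^ Suc k * (\<Sum>i<n. (y i)\<^sup>2) \<le> quad_form (Z * Z) y"
    using quad_form_pow_two_pow_ge[OF X sym Y rho, of "Suc k"] ZZ by simp
  also have "\<dots> \<le> mat_trace (Z * Z) * (\<Sum>i<n. (y i)\<^sup>2)"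
    unfolding Z_def by (rule quad_form_mult_self_le_trace[OF Z[unfolded Z_def] pow_mat_symmetric[OF X sym]])
  finally show ?thesis using Y ZZ by simp
qed

lemma le_if_two_pow_powers_bounded:
  fixes rho R :: real and K :: nat
  assumes R: "0 \<le> R" and bound: "\<And>k. rho ^ 2 ^ Suc k \<le> K * R ^ 2 ^ Suc k"
  shows "rho \<le> R"
proof (rule ccontr)
  assume "\<not> rho \<le> R"
  then have rho: "0 < rho" and q1: "R / rho < 1" using R by auto
  obtain k where k: "(R / rho) ^ k < 1 / (real K + 1)"
    using real_arch_pow_inv[OF _ q1, of "1 / (real K + 1)"] by auto
  define N where "N = (2::nat) ^ Suc k"
  have "k \<le> N" unfolding N_def by (metis less_exp less_imp_le_nat power_Suc2 mult_2_right
        trans_le_add1)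
  then have "(R / rho) ^ N \<le> (R / rho) ^ k"
    using R rho q1 by (intro power_decreasing) auto
  with k have qN: "(R / rho) ^ N < 1 / (real K + 1)" by simp
  have "rho ^ N \<le> K * ((R / rho) ^ N * rho ^ N)"
    using bound[of k] rho unfolding N_def by (simp add: power_divide)
  then have "1 \<le> K * (R / rho) ^ N" using rho by (simp add: mult.assoc[symmetric])
  also have "\<dots> \<le> K * (1 / (real K + 1))" using qN by (intro mult_left_mono) auto
  also have "\<dots> < 1" by (simp add: field_simps)
  finally show False by simp
qed

lemma rayleigh_le_shifted_eigenvalue:
  fixes A :: "real mat"
  assumes A: "A \<in> carrier_mat n n" and sym: "\<And>i j. i < n \<Longrightarrow> j < n \<Longrightarrow> A $$ (i, j) = A $$ (j, i)"
    and split: "char_poly A = (\<Prod>a\<leftarrow>as. [:- a, 1:])" and L: "proots (char_poly A) \<noteq> {#}"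
    and shifted_nonneg: "\<And>l. l \<in># proots (char_poly A) \<Longrightarrow> 0 \<le> l + c"
    and Y: "0 < (\<Sum>i<n. (y i)\<^sup>2)"
    and rho: "0 \<le> rho" "rho * (\<Sum>i<n. (y i)\<^sup>2) \<le> quad_form (A + c \<cdot>\<^sub>m 1\<^sub>m n) y"
  shows "\<exists>l\<in>#proots (char_poly A). rho \<le> l + c"
proof -
  define L where "L = proots (char_poly A)"
  define R where "R = Max ((\<lambda>l. l + c) ` set_mset L)"
  have "R \<in> (\<lambda>l. l + c) ` set_mset L" unfolding R_def L_def using L by (intro Max_in) auto
  then obtain l0 where l0: "l0 \<in># L" and R_eq: "R = l0 + c" by auto
  have R_ge: "l + c \<le> R" if "l \<in># L" for l
    unfolding R_def using that by (intro Max_ge) auto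
  define X where "X = A + c \<cdot>\<^sub>m 1\<^sub>m n"
  have X: "X \<in> carrier_mat n n" using A unfolding X_def by simp
  have symX: "X $$ (i, j) = X $$ (j, i)" if "i < n" "j < n" for i j
    using A sym that unfolding X_def by auto
  have "rho \<le> R"
  proof (rule le_if_two_pow_powers_bounded)
    show "0 \<le> R" using shifted_nonneg l0 R_eq unfolding L_def by simp
    fix k
    have "rho ^ 2 ^ Suc k \<le> mat_trace (X ^\<^sub>m 2 ^ Suc k)"
      using rayleigh_pow_le_mat_trace[OF X symX Y rho[unfolded X_def[symmetric]]] .
    also have "\<dots> = (\<Sum>l\<in>#L. (l + c) ^ 2 ^ Suc k)"
      unfolding X_def L_def by (rule mat_trace_pow_shift_eq_sum_eigenvalues[OF A split])
    also have "\<dots> \<le> (\<Sum>l\<in>#L. R ^ 2 ^ Suc k)"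
      using shifted_nonneg R_ge unfolding L_def by (intro sum_mset_mono power_mono) auto
    finally show "rho ^ 2 ^ Suc k \<le> size L * R ^ 2 ^ Suc k" by simp
  qed
  with l0 R_eq show ?thesis unfolding L_def by auto
qed

theorem rayleigh_le_max_eigenvalue:
  fixes A :: "real mat"
  assumes A: "A \<in> carrier_mat n n" and sym: "\<And>i j. i < n \<Longrightarrow> j < n \<Longrightarrow> A $$ (i, j) = A $$ (j, i)"
    and Y: "0 < (\<Sum>i<n. (y i)\<^sup>2)"
  shows "\<exists>l\<in>#proots (char_poly A). quad_form A y \<le> l * (\<Sum>i<n. (y i)\<^sup>2)"
proof -
  define Ys where "Ys = (\<Sum>i<n. (y i)\<^sup>2)"
  define L where "L = proots (char_poly A)"
  obtain es where split: "char_poly A = (\<Prod>a\<leftarrow>es. [:- a, 1:])" and "length es = n"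
    using char_poly_real_symmetric_splits[OF A sym] by blast
  moreover have "n \<noteq> 0" using Y by (rule contrapos_pn) simp
  ultimately have L: "L \<noteq> {#}"
    unfolding L_def split proots_prod_linear_factors by auto
  define c where "c = Max (abs ` set_mset L)"
  have shifted_nonneg: "0 \<le> l + c" if "l \<in># L" for l
  proof -
    have "\<bar>l\<bar> \<le> c" unfolding c_def using that by (intro Max_ge) auto
    then show ?thesis by linarith
  qed
  define rho where "rho = quad_form A y / Ys + c"
  have "\<exists>l\<in>#L. rho \<le> l + c"
  proof (cases "rho \<le> 0")
    case True
    with L shifted_nonneg show ?thesis by force
  next
    case False
    have "quad_form (A + c \<cdot>\<^sub>m 1\<^sub>m n) y = rho * Ys"
      unfolding quad_form_add_smult_one[OF A] rho_def Ys_def using Y by (simp add: field_simps)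
    with False show ?thesis
      using rayleigh_le_shifted_eigenvalue[OF A sym split L[unfolded L_def] shifted_nonneg[unfolded L_def] Y]
      unfolding L_def Ys_def by simp
  qed
  then show ?thesis
    using Y unfolding rho_def Ys_def L_def by (auto simp: divide_le_eq)
qed

section \<open>Sums of exponentials\<close>

lemma add_one_less_exp:
  fixes l :: real
  assumes "l \<noteq> 0"
  shows "1 + l < exp l"
proof (cases "1 + l / 2 < 0")
  case True
  then show ?thesis using exp_gt_zero[of l] by linarith
next
  case False
  have "(1 + l / 2)\<^sup>2 \<le> (exp (l / 2))\<^sup>2"
    using False by (intro power_mono) auto
  also have "(exp (l / 2))\<^sup>2 = exp l" by (simp add: power2_eq_square exp_add[symmetric])
  finally have "1 + l + l\<^sup>2 / 4 \<le> exp l" by (simp add: power2_eq_square algebra_simps)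
  moreover have "0 < l\<^sup>2 / 4" using assms by simp
  ultimately show ?thesis by linarith
qed

lemma exp_minus_self_mono:
  fixes x l :: real
  assumes "0 \<le> x" and "x \<le> l"
  shows "exp x - x \<le> exp l - l"
proof -
  have "exp x * (1 + (l - x)) \<le> exp x * exp (l - x)"
    by (intro mult_left_mono) auto
  also have "\<dots> = exp l" by (simp add: exp_diff)
  finally show ?thesis
    using mult_right_mono[of 1 "exp x" "l - x"] assms by (simp add: algebra_simps)
qed

lemma sum_mset_exp_ge: "real (size L) + sum_mset L \<le> (\<Sum>l\<in>#L. exp (l::real))"
proof (induction L)
  case (add a L)
  then show ?case using add_mono[OF exp_ge_add_one_self[of a] add.IH] by (simp add: algebra_simps)
qed simp

lemma sum_mset_exp_eq_iff:
  "(\<Sum>l\<in>#L. exp (l::real)) = real (size L) + sum_mset L \<longleftrightarrow> (\<forall>l\<in>#L. l = 0)"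
proof
  assume eq: "(\<Sum>l\<in>#L. exp l) = real (size L) + sum_mset L"
  show "\<forall>l\<in>#L. l = 0"
  proof (rule ccontr)
    assume "\<not> (\<forall>l\<in>#L. l = 0)"
    then obtain l L' where "L = add_mset l L'" and "l \<noteq> 0"
      by (metis multi_member_split)
    then show False
      using eq add_one_less_exp[of l] sum_mset_exp_ge[of L'] by simp
  qed
next
  assume "\<forall>l\<in>#L. l = 0"
  then show "(\<Sum>l\<in>#L. exp l) = real (size L) + sum_mset L"
    by (induction L) auto
qed

lemma sum_mset_power2_eq_0_iff: "(\<Sum>l\<in>#L. (l::real)\<^sup>2) = 0 \<longleftrightarrow> (\<forall>l\<in>#L. l = 0)"
proof (induction L)
  case (add a L)
  have "0 \<le> (\<Sum>l\<in>#L. l\<^sup>2)" by (induction L) auto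
  with add show ?case by (simp add: add_nonneg_eq_0_iff)
qed simp

lemma sum_mset_exp_lower_bound:
  fixes L :: "real multiset"
  assumes sum0: "sum_mset L = 0" and l0: "l0 \<in># L" and x: "0 \<le> x" "x \<le> l0"
  shows "exp x + (real (size L) - 1) - x \<le> (\<Sum>l\<in>#L. exp l)"
    and "(\<Sum>l\<in>#L. exp l) = exp x + (real (size L) - 1) - x \<Longrightarrow> \<forall>l\<in>#L. l = 0"
proof -
  obtain L' where L: "L = add_mset l0 L'" using multi_member_split[OF l0] by blast
  have rest: "real (size L') - l0 \<le> (\<Sum>l\<in>#L'. exp l)"
    using sum_mset_exp_ge[of L'] sum0 L by simp
  show "exp x + (real (size L) - 1) - x \<le> (\<Sum>l\<in>#L. exp l)"
    using rest exp_minus_self_mono[OF x] L by simp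
  assume "(\<Sum>l\<in>#L. exp l) = exp x + (real (size L) - 1) - x"
  then have "(\<Sum>l\<in>#L'. exp l) = real (size L') + sum_mset L'"
    using rest exp_minus_self_mono[OF x] sum0 L by simp
  then have "\<forall>l\<in>#L'. l = 0" by (simp only: sum_mset_exp_eq_iff)
  moreover from this have "sum_mset L' = 0" by (induction L') auto
  then have "l0 = 0" using sum0 L by simp
  ultimately show "\<forall>l\<in>#L. l = 0" using L by simp
qed

section \<open>Graphs\<close>

lemma real_degree_eq_sum: "real (degree n E i) = (\<Sum>j<n. if E i j then 1 else 0)"
proof -
  have "{j. j < n \<and> E i j} = {j\<in>{..<n}. E i j}" by auto
  then show ?thesis unfolding degree_def by (simp add: sum.inter_filter[symmetric])
qed

lemma min_degree_attained:
  assumes "0 < n"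
  obtains v where "v < n" and "min_degree n E = degree n E v"
proof -
  have "min_degree n E \<in> degree n E ` {0..<n}"
    unfolding min_degree_def using assms by (intro Min_in) auto
  with that show thesis by auto
qed

lemma two_num_edges_eq_sum:
  assumes g: "simple_graph n E"
  shows "2 * real (num_edges n E) = (\<Sum>i<n. \<Sum>j<n. if E i j then 1 else 0)"
proof -
  have symE: "E i j \<Longrightarrow> E j i" and irr: "\<not> E i i" for i j
    using g unfolding simple_graph_def by auto
  define Up where "Up = {(i, j). i < n \<and> j < n \<and> E i j \<and> i < j}"
  define Down where "Down = {(i, j). i < n \<and> j < n \<and> E i j \<and> j < i}"
  have fin: "finite Up" "finite Down"
    unfolding Up_def Down_def by (rule finite_subset[of _ "{..<n} \<times> {..<n}"], auto)+
  have "Down = prod.swap ` Up" unfolding Up_def Down_def using symE by (auto simp: image_iff)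
  then have card_Down: "card Down = card Up" by (simp add: card_image)
  have "{{i, j} | i j. i < n \<and> j < n \<and> E i j} = (\<lambda>(i, j). {i, j}) ` Up"
    unfolding Up_def using irr symE by (auto simp: image_iff) (metis insert_commute linorder_neqE_nat)
  moreover have "inj_on (\<lambda>(i, j). {i, j}) Up"
    unfolding inj_on_def Up_def by (auto simp: doubleton_eq_iff)
  ultimately have "num_edges n E = card Up" unfolding num_edges_def by (simp add: card_image)
  moreover have "Sigma {..<n} (\<lambda>i. {j\<in>{..<n}. E i j}) = Up \<union> Down"
    unfolding Up_def Down_def using irr by auto (metis linorder_neqE_nat)
  then have "card (Sigma {..<n} (\<lambda>i. {j\<in>{..<n}. E i j})) = card Up + card Down"
    using fin by (simp add: card_Un_disjoint disjoint_iff Up_def Down_def)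
  moreover have "real (card (Sigma {..<n} (\<lambda>i. {j\<in>{..<n}. E i j})))
      = (\<Sum>i<n. \<Sum>j<n. if E i j then 1 else 0)"
    by (simp add: sum.inter_filter[symmetric])
  ultimately show ?thesis using card_Down by simp
qed

lemma num_edges_eq_0_iff: "num_edges n E = 0 \<longleftrightarrow> (\<forall>i<n. \<forall>j<n. \<not> E i j)"
proof -
  have "finite {{i, j} | i j. i < n \<and> j < n \<and> E i j}"
    by (rule finite_subset[of _ "Pow {..<n}"]) auto
  then show ?thesis unfolding num_edges_def card_eq_0_iff by blast
qed

lemma graph_iso_edgeless_iff: "graph_iso n E edgeless \<longleftrightarrow> (\<forall>i<n. \<forall>j<n. \<not> E i j)"
  unfolding graph_iso_def edgeless_def by (metis bij_betw_id id_apply)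

lemma adj_matrix_carrier: "adj_matrix n E \<in> carrier_mat n n"
  unfolding adj_matrix_def by simp

lemma adj_matrix_index: "i < n \<Longrightarrow> j < n \<Longrightarrow> adj_matrix n E $$ (i, j) = (if E i j then 1 else 0)"
  unfolding adj_matrix_def by simp

lemma adj_matrix_symmetric:
  assumes "simple_graph n E" and "i < n" and "j < n"
  shows "adj_matrix n E $$ (i, j) = adj_matrix n E $$ (j, i)"
  using assms unfolding simple_graph_def by (auto simp: adj_matrix_index)

definition adj_spectrum :: "nat \<Rightarrow> (nat \<Rightarrow> nat \<Rightarrow> bool) \<Rightarrow> real multiset" where
  "adj_spectrum n E = proots (char_poly (adj_matrix n E))"

lemma adj_spectrum_power_sums:
  assumes g: "simple_graph n E"
  shows "size (adj_spectrum n E) = n" and "sum_mset (adj_spectrum n E) = 0"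
    and "(\<Sum>l\<in>#adj_spectrum n E. l\<^sup>2) = 2 * real (num_edges n E)"
proof -
  let ?A = "adj_matrix n E"
  note A = adj_matrix_carrier[of n E] and sym = adj_matrix_symmetric[OF g]
  have E_sym: "E i j \<longleftrightarrow> E j i" for i j using g unfolding simple_graph_def by blast
  obtain es where split: "char_poly ?A = (\<Prod>a\<leftarrow>es. [:- a, 1:])" and "length es = n"
    using char_poly_real_symmetric_splits[OF A sym] by blast
  then show "size (adj_spectrum n E) = n"
    unfolding adj_spectrum_def split proots_prod_linear_factors by simp
  have "sum_mset (adj_spectrum n E) = mat_trace (?A ^\<^sub>m 1)"
    unfolding adj_spectrum_def mat_trace_pow_eq_sum_eigenvalues[OF A split] by simp
  also have "\<dots> = 0"
    using g A unfolding mat_trace_def simple_graph_def by (simp add: adj_matrix_index)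
  finally show "sum_mset (adj_spectrum n E) = 0" .
  have "(\<Sum>l\<in>#adj_spectrum n E. l\<^sup>2) = mat_trace (?A * ?A)"
    unfolding adj_spectrum_def mat_trace_pow_eq_sum_eigenvalues[OF A split, symmetric]
    using A by (simp add: numeral_2_eq_2)
  also have "\<dots> = (\<Sum>i<n. \<Sum>j<n. if E i j then 1 else 0)"
    unfolding mat_trace_def using A
    by (auto simp: scalar_prod_def lessThan_atLeast0 adj_matrix_index E_sym intro!: sum.cong)
  also have "\<dots> = 2 * real (num_edges n E)"
    by (rule two_num_edges_eq_sum[OF g, symmetric])
  finally show "(\<Sum>l\<in>#adj_spectrum n E. l\<^sup>2) = 2 * real (num_edges n E)" .
qed

lemma adj_quad_form_delete_vertex:
  assumes g: "simple_graph n E" and v: "v < n"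
  shows "quad_form (adj_matrix n E) (\<lambda>i. if i = v then 0 else 1)
    = 2 * real (num_edges n E) - 2 * real (degree n E v)"
proof -
  let ?I = "\<lambda>i j. if E i j then 1 else 0 :: real"
  have entry: "(if i = v then 0 else 1) * adj_matrix n E $$ (i, j) * (if j = v then 0 else 1)
      = ?I i j - (if i = v then ?I v j else 0) - (if j = v then ?I v i else 0)"
    if "i < n" "j < n" for i j
    using g that unfolding simple_graph_def by (auto simp: adj_matrix_index)
  have row_v: "(\<Sum>i<n. \<Sum>j<n. if i = v then ?I v j else 0) = (\<Sum>j<n. ?I v j)"
    using v by (subst sum.swap) (simp add: sum.delta)
  have col_v: "(\<Sum>i<n. \<Sum>j<n. if j = v then ?I v i else 0) = (\<Sum>i<n. ?I v i)"
    using v by (simp add: sum.delta)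
  have "quad_form (adj_matrix n E) (\<lambda>i. if i = v then 0 else 1)
      = (\<Sum>i<n. \<Sum>j<n. ?I i j - (if i = v then ?I v j else 0) - (if j = v then ?I v i else 0))"
    unfolding quad_form_def using adj_matrix_carrier[of n E] entry by (intro sum.cong) auto
  also have "\<dots> = (\<Sum>i<n. \<Sum>j<n. ?I i j) - (\<Sum>j<n. ?I v j) - (\<Sum>i<n. ?I v i)"
    by (simp only: sum_subtractf row_v col_v)
  also have "\<dots> = 2 * real (num_edges n E) - 2 * real (degree n E v)"
    by (simp add: two_num_edges_eq_sum[OF g] real_degree_eq_sum)
  finally show ?thesis .
qed


lemma adj_spectrum_ge_min_degree_bound:
  assumes g: "simple_graph n E" and n: "2 \<le> n"
  defines "x \<equiv> 2 * (real (num_edges n E) - real (min_degree n E)) / (real n - 1)"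
  shows "0 \<le> x" and "\<exists>l\<in>#adj_spectrum n E. x \<le> l"
proof -
  obtain v where v: "v < n" and dv: "min_degree n E = degree n E v"
    using min_degree_attained[of n] n by auto
  define y where "y i = (if i = v then 0 else 1 :: real)" for i
  have "(\<Sum>i<n. (y i)\<^sup>2) = real (card ({..<n} - {v}))"
    unfolding y_def by (simp add: if_distrib[of "\<lambda>r. r\<^sup>2"] sum.If_cases Diff_eq)
  also have "\<dots> = real n - 1" using v n by (simp add: of_nat_diff)
  finally have Ys: "(\<Sum>i<n. (y i)\<^sup>2) = real n - 1" .
  have q: "quad_form (adj_matrix n E) y = x * (real n - 1)"
    unfolding y_def adj_quad_form_delete_vertex[OF g v] x_def dv using n by simp
  have "0 \<le> quad_form (adj_matrix n E) y"
    unfolding quad_form_def y_def using adj_matrix_carrier[of n E]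
    by (auto simp: adj_matrix_index intro!: sum_nonneg)
  then show "0 \<le> x" using q n by (simp add: zero_le_mult_iff)
  obtain l where "l \<in># adj_spectrum n E" and "quad_form (adj_matrix n E) y \<le> l * (real n - 1)"
    using rayleigh_le_max_eigenvalue[OF adj_matrix_carrier adj_matrix_symmetric[OF g], of y] Ys n
    unfolding adj_spectrum_def by auto
  then show "\<exists>l\<in>#adj_spectrum n E. x \<le> l" using q n by auto
qed

theorem mainTheorem5:
  fixes n :: nat and E :: "nat \<Rightarrow> nat \<Rightarrow> bool"
  assumes "simple_graph n E" and "n \<ge> 2"
  defines "x \<equiv> 2 * (real (num_edges n E) - real (min_degree n E)) / (real n - 1)"
  shows "estrada_index n E \<ge> exp x + (real n - 1) - x \<and>
         (estrada_index n E = exp x + (real n - 1) - x \<longleftrightarrow> graph_iso n E edgeless)"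
proof -
  note spec = adj_spectrum_power_sums[OF assms(1)]
  have EE: "estrada_index n E = (\<Sum>l\<in>#adj_spectrum n E. exp l)"
    unfolding estrada_index_def adj_spectrum_def ..
  have x0: "0 \<le> x" unfolding x_def by (rule adj_spectrum_ge_min_degree_bound[OF assms(1,2)])
  obtain l0 where l0: "l0 \<in># adj_spectrum n E" "x \<le> l0"
    using adj_spectrum_ge_min_degree_bound[OF assms(1,2)] unfolding x_def by blast
  note bound = sum_mset_exp_lower_bound[OF spec(2) l0(1) x0 l0(2), unfolded spec(1) EE[symmetric]]
  have edgeless_iff: "graph_iso n E edgeless \<longleftrightarrow> (\<forall>l\<in>#adj_spectrum n E. l = 0)"
    using spec(3) by (simp add: graph_iso_edgeless_iff num_edges_eq_0_iff[symmetric]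
        sum_mset_power2_eq_0_iff[symmetric])
  have "estrada_index n E = exp x + (real n - 1) - x" if "graph_iso n E edgeless"
  proof -
    have "estrada_index n E = real n"
      using that edgeless_iff spec(1,2) sum_mset_exp_eq_iff[of "adj_spectrum n E"] EE by simp
    moreover have "x \<le> 0"
      using that assms(2) unfolding x_def graph_iso_edgeless_iff num_edges_eq_0_iff[symmetric]
      by (simp add: divide_nonpos_pos)
    then have "x = 0" using x0 by simp
    ultimately show ?thesis by simp
  qed
  with bound edgeless_iff show ?thesis by blast
qed

end
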